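(* Let $k\ge2$, $\eta\in[0,1)$ and $c>0$. The equation $(1-\zeta)\,x_k^\ast(c,\zeta)^k\,c^{-k}=\eta$ has a unique solution $\zeta\in[0,1]$. Moreover, if $c<\overline c_k(\eta)$ then this solution satisfies $(k-1)\zeta c^{k-1}<e$.
   Context: $W$ is the Lambert $W$ function; $x_k^\ast(c,\zeta)=\left(\frac{W((k-1)c^{k-1}\zeta)}{(k-1)\zeta}\right)^{\frac1{k-1}}$ for $\zeta\in(0,1]$ and $x_k^\ast(c,0)=c$. $\eta_k^\ast=e^{-k/(k-1)}$; $\overline c_k(\eta)=\left(\frac{e}{(k-1)(1-\eta/\eta_k^\ast)}\right)^{\frac1{k-1}}$ if $\eta<\eta_k^\ast$ and $+\infty$ otherwise. *)

theory Defs
  imports "HOL-Analysis.Analysis" "HOL-Library.Extended_Real"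
begin

text \<open>Principal branch of the Lambert W function on its domain x \<ge> -1/e:
  the unique w \<ge> -1 with w * exp w = x.\<close>
definition lambertW :: "real \<Rightarrow> real" where
  "lambertW x = (THE w. w \<ge> -1 \<and> w * exp w = x)"

definition xstar :: "nat \<Rightarrow> real \<Rightarrow> real \<Rightarrow> real" where
  "xstar k c \<zeta> =
     (if \<zeta> = 0 then c
      else (lambertW (real (k - 1) * c ^ (k - 1) * \<zeta>) / (real (k - 1) * \<zeta>))
             powr (1 / real (k - 1)))"

definition etastar :: "nat \<Rightarrow> real" where
  "etastar k = exp (- (real k / real (k - 1)))"

definition cbar :: "nat \<Rightarrow> real \<Rightarrow> ereal" where
  "cbar k \<eta> =
     (if \<eta> < etastar k
      then ereal ((exp 1 / (real (k - 1) * (1 - \<eta> / etastar k))) powr (1 / real (k - 1)))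
      else \<infinity>)"

end

theory Submission
  imports Defs
begin

text \<open>Put W = lambertW ((k - 1) c^(k-1) \<zeta>). Then x*_k(c, \<zeta>) = c exp (- W / (k - 1)), so the
  left-hand side of the equation is (1 - \<zeta>) exp (- k W / (k - 1)): strictly decreasing in \<zeta>, with
  value 1 at \<zeta> = 0 and 0 at \<zeta> = 1. Continuity, needed for the intermediate value theorem, comes
  for free after the substitution \<zeta> = W e^W / ((k - 1) c^(k-1)).
  For the bound: if (k - 1) \<zeta> c^(k-1) \<ge> e then W \<ge> 1, hence \<eta> \<le> (1 - \<zeta>) \<eta>*_k; but
  c < cbar_k(\<eta>) means (k - 1) c^(k-1) (1 - \<eta> / \<eta>*_k) < e, which forces \<zeta> > 1 - \<eta> / \<eta>*_k.\<close>

lemma times_exp_strict_mono_on: "strict_mono_on {0..} (\<lambda>w::real. w * exp w)"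
  by (rule strict_mono_onI) (auto intro: mult_strict_mono)

lemma times_exp_surj_nonneg:
  fixes a :: real
  assumes "0 \<le> a"
  shows "\<exists>w\<ge>0. w * exp w = a"
proof -
  have "a \<le> a * exp a" using assms by (simp add: mult_le_cancel_left1)
  moreover have "continuous_on {0..a} (\<lambda>w. w * exp w)" by (intro continuous_intros)
  ultimately show ?thesis using IVT'[of "\<lambda>w. w * exp w" 0 a a] assms by auto
qed

lemma lambertW_eqI:
  assumes "0 \<le> w" "w * exp w = a"
  shows "lambertW a = w"
  unfolding lambertW_def
proof (rule the_equality)
  show "w \<ge> -1 \<and> w * exp w = a" using assms by auto
next
  fix v assume v: "v \<ge> -1 \<and> v * exp v = a"
  have "v \<ge> 0"
  proof (rule ccontr)
    assume "\<not> v \<ge> 0"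
    then have "a < 0" using v mult_neg_pos[of v "exp v"] by simp
    moreover have "0 \<le> a" using assms by (metis exp_ge_zero mult_nonneg_nonneg)
    ultimately show False by simp
  qed
  then show "v = w"
    using strict_mono_on_eqD[OF times_exp_strict_mono_on, of w v] assms v by simp
qed

lemma
  assumes "0 \<le> a"
  shows lambertW_nonneg: "0 \<le> lambertW a"
    and lambertW_times_exp: "lambertW a * exp (lambertW a) = a"
  using times_exp_surj_nonneg[OF assms] lambertW_eqI by auto

lemma lambertW_mono:
  assumes "0 \<le> a" "a \<le> b"
  shows "lambertW a \<le> lambertW b"
  using strict_mono_on_less_eq[OF times_exp_strict_mono_on, of "lambertW a" "lambertW b"] assms
  by (simp add: lambertW_nonneg lambertW_times_exp)

lemma one_le_lambertW:
  assumes "exp 1 \<le> a"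
  shows "1 \<le> lambertW a"
proof -
  have "lambertW (exp 1) = 1" by (rule lambertW_eqI) auto
  then show ?thesis using lambertW_mono[OF _ assms] by simp
qed

lemma xstar_eq_exp_lambertW:
  assumes k: "k \<ge> 2" and c: "c > 0" and z: "0 \<le> z"
  shows "xstar k c z = c * exp (- lambertW (real (k - 1) * c ^ (k - 1) * z) / real (k - 1))"
proof (cases "z = 0")
  case True
  have "lambertW 0 = 0" by (rule lambertW_eqI) auto
  then show ?thesis using True by (simp add: xstar_def)
next
  case False
  define m where "m = real (k - 1)"
  define W where "W = lambertW (m * c ^ (k - 1) * z)"
  have m: "m > 0" using k by (simp add: m_def)
  have "W * exp W = m * c ^ (k - 1) * z"
    unfolding W_def using m c z by (intro lambertW_times_exp) simp
  then have "W / (m * z) = c ^ (k - 1) * exp (- W)"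
    using m z False by (simp add: field_simps exp_minus)
  then have "xstar k c z = (c ^ (k - 1) * exp (- W)) powr (1 / m)"
    using False by (simp add: xstar_def W_def m_def)
  also have "\<dots> = (c powr m) powr (1 / m) * exp (- W) powr (1 / m)"
    using c by (simp add: powr_mult m_def powr_realpow)
  also have "\<dots> = c * exp (- W / m)"
    using c m by (simp add: powr_powr powr_def)
  finally show ?thesis by (simp add: W_def m_def)
qed

definition eta_of :: "nat \<Rightarrow> real \<Rightarrow> real \<Rightarrow> real" where
  "eta_of k c \<zeta> = (1 - \<zeta>) * xstar k c \<zeta> ^ k / c ^ k"

lemma eta_of_eq_lambertW:
  assumes "k \<ge> 2" "c > 0" "0 \<le> \<zeta>"
  shows "eta_of k c \<zeta>
     = (1 - \<zeta>) * exp (- (real k / real (k - 1)) * lambertW (real (k - 1) * c ^ (k - 1) * \<zeta>))"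
proof -
  have "exp (- lambertW (real (k - 1) * c ^ (k - 1) * \<zeta>) / real (k - 1)) ^ k
     = exp (- (real k / real (k - 1)) * lambertW (real (k - 1) * c ^ (k - 1) * \<zeta>))"
    by (simp add: exp_of_nat_mult[symmetric])
  then show ?thesis
    using assms by (simp add: eta_of_def xstar_eq_exp_lambertW power_mult_distrib)
qed

lemma eta_of_strict_antimono_on:
  assumes "k \<ge> 2" "c > 0"
  shows "strict_antimono_on {0..1} (eta_of k c)"
proof (rule monotone_onI)
  fix z1 z2 :: real assume z: "z1 \<in> {0..1}" "z2 \<in> {0..1}" "z1 < z2"
  define W where "W z = lambertW (real (k - 1) * c ^ (k - 1) * z)" for z
  define q where "q = real k / real (k - 1)"
  have "W z1 \<le> W z2" unfolding W_def using assms z by (intro lambertW_mono) auto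
  then have "exp (- q * W z2) \<le> exp (- q * W z1)"
    using assms by (simp add: q_def mult_left_mono divide_right_mono)
  then have "(1 - z2) * exp (- q * W z2) < (1 - z1) * exp (- q * W z1)"
    using z by (intro mult_less_le_imp_less) auto
  then show "eta_of k c z2 < eta_of k c z1"
    using assms z by (simp add: eta_of_eq_lambertW W_def q_def)
qed

lemma eta_of_times_exp_param:
  assumes "k \<ge> 2" "c > 0" "0 \<le> w"
  defines "A \<equiv> real (k - 1) * c ^ (k - 1)"
  shows "eta_of k c (w * exp w / A) = (1 - w * exp w / A) * exp (- (real k / real (k - 1)) * w)"
proof -
  have A: "A > 0" using assms by (simp add: A_def)
  have "lambertW (A * (w * exp w / A)) = w" using A assms by (intro lambertW_eqI) auto
  then show ?thesis using A assms by (simp add: eta_of_eq_lambertW A_def mult.assoc)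
qed

lemma eta_of_surj:
  assumes "k \<ge> 2" "c > 0" "0 \<le> \<eta>" "\<eta> \<le> 1"
  shows "\<exists>\<zeta>\<in>{0..1}. eta_of k c \<zeta> = \<eta>"
proof -
  define A where "A = real (k - 1) * c ^ (k - 1)"
  define g where "g w = (1 - w * exp w / A) * exp (- (real k / real (k - 1)) * w)" for w
  define W1 where "W1 = lambertW A"
  have A: "A > 0" using assms by (simp add: A_def)
  have W1: "0 \<le> W1" "W1 * exp W1 = A"
    using A by (simp_all add: W1_def lambertW_nonneg lambertW_times_exp)
  have "g W1 = 0" "g 0 = 1" using W1 A by (simp_all add: g_def)
  moreover have "continuous_on {0..W1} g" unfolding g_def using A by (intro continuous_intros) auto
  ultimately obtain w where w: "0 \<le> w" "w \<le> W1" "g w = \<eta>"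
    using IVT2'[of g W1 \<eta> 0] assms W1 by auto
  have "w * exp w \<le> W1 * exp W1"
    using strict_mono_on_leD[OF times_exp_strict_mono_on, of w W1] w W1(1) by simp
  then have "w * exp w / A \<in> {0..1}" using w W1 A by simp
  moreover have "eta_of k c (w * exp w / A) = \<eta>"
    using eta_of_times_exp_param[OF assms(1,2) w(1)] w(3) by (simp add: g_def A_def)
  ultimately show ?thesis by blast
qed

lemma less_cbar_iff:
  assumes "k \<ge> 2" "c > 0" "\<eta> < etastar k"
  shows "ereal c < cbar k \<eta> \<longleftrightarrow> real (k - 1) * c ^ (k - 1) * (1 - \<eta> / etastar k) < exp 1"
proof -
  define m where "m = real (k - 1)"
  define B where "B = exp 1 / (m * (1 - \<eta> / etastar k))"
  have m: "m > 0" using assms by (simp add: m_def)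
  have q: "1 - \<eta> / etastar k > 0" using assms by (simp add: etastar_def)
  have "B > 0" using m q by (simp add: B_def)
  have "ereal c < cbar k \<eta> \<longleftrightarrow> c < B powr (1 / m)"
    using assms by (simp add: cbar_def B_def m_def)
  also have "\<dots> \<longleftrightarrow> c powr m < B"
    using powr_less_mono2[of m c "B powr (1 / m)"] powr_less_mono2[of "1 / m" "c powr m" B]
      assms m \<open>B > 0\<close> by (auto simp: powr_powr)
  also have "c powr m = c ^ (k - 1)" unfolding m_def using assms(2) by (rule powr_realpow)
  also have "c ^ (k - 1) < B \<longleftrightarrow> m * c ^ (k - 1) * (1 - \<eta> / etastar k) < exp 1"
    using m q unfolding B_def by (simp add: pos_less_divide_eq mult_ac)
  finally show ?thesis by (simp add: m_def)
qed

lemma eta_of_le_etastar: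
  assumes "k \<ge> 2" "c > 0" "\<zeta> \<in> {0..1}" "exp 1 \<le> real (k - 1) * c ^ (k - 1) * \<zeta>"
  shows "eta_of k c \<zeta> \<le> (1 - \<zeta>) * etastar k"
proof -
  define q where "q = real k / real (k - 1)"
  have "q \<ge> 0" by (simp add: q_def)
  moreover have "1 \<le> lambertW (real (k - 1) * c ^ (k - 1) * \<zeta>)"
    using assms by (intro one_le_lambertW)
  ultimately have "exp (- q * lambertW (real (k - 1) * c ^ (k - 1) * \<zeta>)) \<le> exp (- q)"
    by (simp add: mult_le_cancel_left1)
  then show ?thesis
    using assms by (simp add: eta_of_eq_lambertW etastar_def q_def mult_left_mono)
qed

lemma eta_of_root_bound:
  assumes "k \<ge> 2" "c > 0" "\<zeta> \<in> {0..1}" "ereal c < cbar k (eta_of k c \<zeta>)"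
  shows "real (k - 1) * \<zeta> * c ^ (k - 1) < exp 1"
proof (rule ccontr)
  define \<eta> where "\<eta> = eta_of k c \<zeta>"
  assume "\<not> ?thesis"
  then have large: "exp 1 \<le> real (k - 1) * c ^ (k - 1) * \<zeta>" by (simp add: mult_ac)
  then have "\<zeta> > 0" using assms by (cases "\<zeta> = 0") auto
  have es: "etastar k > 0" by (simp add: etastar_def)
  have le: "\<eta> \<le> (1 - \<zeta>) * etastar k"
    unfolding \<eta>_def using eta_of_le_etastar[OF assms(1-3) large] .
  moreover have "(1 - \<zeta>) * etastar k < etastar k" using \<open>\<zeta> > 0\<close> es by simp
  ultimately have "\<eta> < etastar k" by simp
  then have "real (k - 1) * c ^ (k - 1) * (1 - \<eta> / etastar k) < exp 1"
    using less_cbar_iff[of k c \<eta>] assms by (simp add: \<eta>_def)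
  also note large
  finally have "1 - \<eta> / etastar k < \<zeta>"
    using mult_less_cancel_left_pos[of "real (k - 1) * c ^ (k - 1)"] assms by simp
  then show False using le es by (simp add: field_simps)
qed

theorem mainTheorem14:
  fixes k :: nat and \<eta> c :: real
  assumes "k \<ge> 2" and "0 \<le> \<eta>" and "\<eta> < 1" and "c > 0"
  shows "(\<exists>!\<zeta>. \<zeta> \<in> {0..1} \<and> (1 - \<zeta>) * xstar k c \<zeta> ^ k / c ^ k = \<eta>)
       \<and> (ereal c < cbar k \<eta> \<longrightarrow>
           (\<forall>\<zeta>\<in>{0..1}. (1 - \<zeta>) * xstar k c \<zeta> ^ k / c ^ k = \<eta> \<longrightarrow>
              real (k - 1) * \<zeta> * c ^ (k - 1) < exp 1))"
proof -
  have "inj_on (eta_of k c) {0..1}"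
    using eta_of_strict_antimono_on[OF assms(1,4)] strict_antimono_iff_antimono by blast
  moreover obtain \<zeta> where "\<zeta> \<in> {0..1}" "eta_of k c \<zeta> = \<eta>"
    using eta_of_surj[of k c \<eta>] assms by auto
  ultimately have "\<exists>!\<zeta>. \<zeta> \<in> {0..1} \<and> eta_of k c \<zeta> = \<eta>"
    by (auto simp: inj_on_def)
  moreover have "real (k - 1) * \<zeta> * c ^ (k - 1) < exp 1"
    if "ereal c < cbar k \<eta>" "\<zeta> \<in> {0..1}" "eta_of k c \<zeta> = \<eta>" for \<zeta>
    using eta_of_root_bound[of k c \<zeta>] assms that by simp
  ultimately show ?thesis by (simp add: eta_of_def)
qed

end
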